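(* Let $b$ be the linear endomorphism of $\mathbf{WQSym}$ defined by $b(\mathbf M_u)=\mathbf M_{1\cdot u[1]}$, where $\cdot$ is concatenation and $u[1]$ is $u$ with every letter increased by $1$. For a plane forest $\overline{\mathcal F}$, let $B_+(\overline{\mathcal F})$ be the plane tree obtained by attaching the trees of $\overline{\mathcal F}$, in order, as children of a new common root. Then for every plane forest $\overline{\mathcal F}$, $$\pi\big(S'^{\iota(B_+(\overline{\mathcal F}))}\big)=b\big(\pi(S'^{\iota(\overline{\mathcal F})})\big).$$
   Context: A plane forest is a finite sequence of plane trees (rooted trees whose children are linearly ordered). For a plane forest with $n$ vertices, $\iota$ gives the rooted forest on vertex set $[n]$ obtained by numbering the vertices in order of first visit in a left depth-first traversal (trees from left to right). For a rooted forest $\mathcal F$ on $[n]$, over $A'=\{a_{ij}:1\le i\le j\}$ with $a_{hi}\prec a_{ij}$ for $h\le i<j$, $S'^{\mathcal F}$ is the sum of all words $w_1\cdots w_n$ with $w_k$ a diagonal letter $a_{ii}$ for each root $k$ and $w_k\prec w_l$ whenever $k$ is the parent of $l$. $\pi$ is the algebra morphism $a_{ij}\mapsto x_j$ into noncommutative series over $X=\{x_1<x_2<\cdots\}$ (identify $x_i$ with $i$). A packed word is a word over positive integers whose letter set is $\{1,\dots,m\}$; $\mathrm{pack}(w)$ replaces the $r$-th smallest letter by $r$; $\mathbf M_u=\sum_{\mathrm{pack}(w)=u}w$; $\mathbf{WQSym}$ is the span of the $\mathbf M_u$. *)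

theory Defs
  imports Main
begin

datatype ptree = Node "ptree list"

type_synonym pforest = "ptree list"

definition Bplus :: "pforest \<Rightarrow> ptree" where
  "Bplus F = Node F"

(* A rooted forest on [n] is represented by its parent list par of length n:
   par ! (k-1) = None if vertex k is a root, Some p if p is the parent of k. *)
type_synonym rforest = "nat option list"

(* iota_f off p F: parent list of the vertices of F numbered off+1, off+2, ...
   in left depth-first (preorder) order, the roots of F having parent p. *)
fun iota_f :: "nat \<Rightarrow> nat option \<Rightarrow> pforest \<Rightarrow> rforest" where
  "iota_f off p [] = []"
| "iota_f off p (Node cs # ts) =
     (p # iota_f (Suc off) (Some (Suc off)) cs)
     @ iota_f (off + length (p # iota_f (Suc off) (Some (Suc off)) cs)) p ts"

definition iota :: "pforest \<Rightarrow> rforest" where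
  "iota F = iota_f 0 None F"

(* Alphabet A' : letters a_ij = (i,j) with 1 \<le> i \<le> j *)
definition inA' :: "nat \<times> nat \<Rightarrow> bool" where
  "inA' a \<longleftrightarrow> 1 \<le> fst a \<and> fst a \<le> snd a"

definition prec :: "nat \<times> nat \<Rightarrow> nat \<times> nat \<Rightarrow> bool" where
  "prec a b \<longleftrightarrow> (\<exists>h i j. a = (h, i) \<and> b = (i, j) \<and> h \<le> i \<and> i < j)"

(* noncommutative series: coefficient functions on words *)
type_synonym 'a series = "'a list \<Rightarrow> int"

definition Sprime :: "rforest \<Rightarrow> (nat \<times> nat) series" where
  "Sprime par w =
     (if length w = length par
        \<and> (\<forall>k < length w. inA' (w ! k))
        \<and> (\<forall>k < length w. par ! k = None \<longrightarrow> fst (w ! k) = snd (w ! k))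
        \<and> (\<forall>k < length w. \<forall>p. par ! k = Some p \<longrightarrow> prec (w ! (p - 1)) (w ! k))
      then 1 else 0)"

(* pi : a_ij \<mapsto> x_j  (x_j identified with j), extended to series *)
definition pi :: "(nat \<times> nat) series \<Rightarrow> nat series" where
  "pi S v = (\<Sum>w \<in> {w. map snd w = v \<and> (\<forall>a \<in> set w. inA' a)}. S w)"

definition pack :: "nat list \<Rightarrow> nat list" where
  "pack w = map (\<lambda>x. card {y \<in> set w. y \<le> x}) w"

definition packed :: "nat list \<Rightarrow> bool" where
  "packed u \<longleftrightarrow> set u = {1 .. length (remdups u)}"

definition M :: "nat list \<Rightarrow> nat series" where
  "M u w = (if 0 \<notin> set w \<and> pack w = u then 1 else 0)"

(* An element f of WQSym is
   \<Sum>_u f(u) M_u (u packed), so b f = \<Sum>_u f(u) M_{1 . u[1]}; below is its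
   coefficient at v (the index set has at most one element). *)
definition bmap :: "nat series \<Rightarrow> nat series" where
  "bmap f v = (\<Sum>u \<in> {u. packed u \<and> M (1 # map Suc u) v \<noteq> 0}. f u * M (1 # map Suc u) v)"

end

theory Submission
  imports Defs
begin

(* For a rooted forest given by its parent list par, a word w over A' with
   S'^par(w) = 1 is determined by its image v = pi(w): the letter at vertex k is a_{v_k v_k}
   if k is a root and a_{v_p v_k} if p is its parent.  Hence pi(S'^par) is the indicator
   of the "increasing labellings" v of par (positive letters, strictly increasing from a
   parent to each child), provided parents precede their children, which holds for every
   forest iota(F).  The forest iota(B_+(F)) is iota(F) shifted by one with a new root 1
   above all former roots; so v is an increasing labelling of it iff its first letter is
   positive and smaller than all others and the tail is an increasing labelling of iota(F).
   Increasing labellings only depend on the relative order of letters, i.e. are invariant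
   under packing, and b sends exactly the words with such a first letter v_1 to the
   coefficient of pack(tl v). *)

section \<open>The depth-first numbering\<close>

definition shift :: "nat option \<Rightarrow> nat \<Rightarrow> nat option \<Rightarrow> nat option" where
  "shift p d = case_option p (\<lambda>q. Some (q + d))"

lemma iota_f_shift:
  "map (shift p' d) (iota_f off p F) = iota_f (off + d) (shift p' d p) F"
proof (induction off p F arbitrary: d p' rule: iota_f.induct)
  case (1 off p)
  then show ?case by simp
next
  case (2 off p cs ts)
  define L where "L = length (iota_f (Suc off) (Some (Suc off)) cs)"
  have cs: "map (shift p' d) (iota_f (Suc off) (Some (Suc off)) cs)
      = iota_f (Suc off + d) (Some (Suc off + d)) cs"
    using "2.IH"(1)[of p' d] by (simp add: shift_def)
  then have "length (iota_f (Suc off + d) (Some (Suc off + d)) cs) = L"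
    unfolding L_def by (metis length_map)
  moreover have "map (shift p' d) (iota_f (Suc (off + L)) p ts)
      = iota_f (Suc (off + L) + d) (shift p' d p) ts"
    using "2.IH"(3)[of p' d] by (simp add: L_def)
  ultimately show ?case using cs by (simp add: L_def algebra_simps)
qed

corollary iota_f_eq_shift_iota: "iota_f off p F = map (shift p off) (iota F)"
  using iota_f_shift[of p off 0 None F] by (simp add: iota_def shift_def)

lemma iota_f_parent_bound:
  assumes "k < length (iota_f off p F)" and "iota_f off p F ! k = Some q"
  shows "Some q = p \<or> (off < q \<and> q \<le> off + k)"
  using assms
proof (induction off p F arbitrary: k rule: iota_f.induct)
  case (1 off p)
  then show ?case by simp
next
  case (2 off p cs ts)
  define A where "A = iota_f (Suc off) (Some (Suc off)) cs"
  define B where "B = iota_f (off + Suc (length A)) p ts"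
  have split: "iota_f off p (Node cs # ts) = (p # A) @ B"
    by (simp add: A_def B_def)
  consider "k = 0" | k' where "k = Suc k'" "k' < length A" | "Suc (length A) \<le> k"
    by (cases k; cases "k < Suc (length A)") auto
  then show ?case
  proof cases
    case 1
    then show ?thesis using "2.prems" split by simp
  next
    case (2 k')
    then have "A ! k' = Some q" using "2.prems"(2) unfolding split by (simp add: nth_append)
    then show ?thesis using "2.IH"(1)[of k'] 2 by (auto simp: A_def)
  next
    case 3
    then have "B ! (k - Suc (length A)) = Some q" "k - Suc (length A) < length B"
      using "2.prems" unfolding split by (cases k; simp add: nth_append)+
    then show ?thesis using "2.IH"(3) 3 by (fastforce simp: A_def B_def)
  qed
qed

definition parents_before :: "rforest \<Rightarrow> bool" where
  "parents_before par \<longleftrightarrow> (\<forall>k < length par. \<forall>q. par ! k = Some q \<longrightarrow> 1 \<le> q \<and> q \<le> k)"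

lemma parents_before_iota: "parents_before (iota F)"
  using iota_f_parent_bound[of _ 0 None F] by (fastforce simp: parents_before_def iota_def)

section \<open>The series pi(S'^par)\<close>

definition edges_increase :: "rforest \<Rightarrow> nat list \<Rightarrow> bool" where
  "edges_increase par v \<longleftrightarrow> (\<forall>k < length v. \<forall>q. par ! k = Some q \<longrightarrow> v ! (q - 1) < v ! k)"

definition increasing :: "rforest \<Rightarrow> nat list \<Rightarrow> bool" where
  "increasing par v \<longleftrightarrow> length v = length par \<and> 0 \<notin> set v \<and> edges_increase par v"

(* The unique word over A' above v contributing to S'^par. *)
definition lift :: "rforest \<Rightarrow> nat list \<Rightarrow> (nat \<times> nat) list" where
  "lift par v = map (\<lambda>k. (case par ! k of None \<Rightarrow> v ! k | Some q \<Rightarrow> v ! (q - 1), v ! k)) [0..<length v]"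

lemma lift_nth:
  "k < length v \<Longrightarrow> lift par v ! k = (case par ! k of None \<Rightarrow> v ! k | Some q \<Rightarrow> v ! (q - 1), v ! k)"
  by (simp add: lift_def split: option.split)

lemma map_snd_lift: "map snd (lift par v) = v"
  by (rule nth_equalityI) (simp_all add: lift_def)

lemma Sprime_nonzero_lift:
  assumes pb: "parents_before par" and nz: "Sprime par w \<noteq> 0"
  shows "increasing par (map snd w) \<and> w = lift par (map snd w)"
proof -
  let ?v = "map snd w"
  have len: "length w = length par"
    and letters: "\<And>k. k < length w \<Longrightarrow> 1 \<le> fst (w ! k) \<and> fst (w ! k) \<le> snd (w ! k)"
    and roots: "\<And>k. k < length w \<Longrightarrow> par ! k = None \<Longrightarrow> fst (w ! k) = snd (w ! k)"
    and edges: "\<And>k q. k < length w \<Longrightarrow> par ! k = Some q \<Longrightarrow> prec (w ! (q - 1)) (w ! k)"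
    using nz by (auto simp: Sprime_def inA'_def split: if_splits)
  have child: "snd (w ! (q - 1)) < snd (w ! k) \<and> fst (w ! k) = snd (w ! (q - 1))"
    if "k < length w" "par ! k = Some q" for k q
    using edges[OF that] by (auto simp: prec_def)
  have "0 \<notin> set ?v"
    using letters by (fastforce simp: in_set_conv_nth)
  moreover have "edges_increase par ?v"
  proof (unfold edges_increase_def, intro allI impI)
    fix k q assume k: "k < length ?v" and pk: "par ! k = Some q"
    then have "q - 1 < length w" using pb len unfolding parents_before_def by fastforce
    then show "?v ! (q - 1) < ?v ! k" using child[of k q] k pk by simp
  qed
  moreover have "w = lift par ?v"
  proof (rule nth_equalityI)
    fix k assume k: "k < length w"
    have "q - 1 < length w" if "par ! k = Some q" for q
      using pb len k that unfolding parents_before_def by fastforce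
    then show "w ! k = lift par ?v ! k"
      using k roots[OF k] child[OF k] by (auto simp: lift_nth prod_eq_iff split: option.split)
  qed (simp add: lift_def)
  ultimately show ?thesis using len by (simp add: increasing_def)
qed

lemma Sprime_lift:
  assumes pb: "parents_before par" and inc: "increasing par v"
  shows "Sprime par (lift par v) = 1"
proof -
  have len: "length v = length par" and pos: "\<And>k. k < length v \<Longrightarrow> 1 \<le> v ! k"
    and edge: "\<And>k q. k < length v \<Longrightarrow> par ! k = Some q \<Longrightarrow> v ! (q - 1) < v ! k"
    using inc by (auto simp: increasing_def edges_increase_def in_set_conv_nth Suc_le_eq)
  have parent: "q - 1 < length v \<and> 1 \<le> v ! (q - 1)" if "k < length v" "par ! k = Some q" for k q
  proof -
    have "q - 1 < length v" using pb len that unfolding parents_before_def by fastforce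
    then show ?thesis using pos by blast
  qed
  have letters: "inA' (lift par v ! k)" if k: "k < length v" for k
  proof (cases "par ! k")
    case None
    then show ?thesis using k pos by (simp add: lift_nth inA'_def)
  next
    case (Some q)
    then show ?thesis using k edge[OF k Some] parent[OF k Some] by (simp add: lift_nth inA'_def)
  qed
  moreover have "prec (lift par v ! (q - 1)) (lift par v ! k)"
    if "k < length v" "par ! k = Some q" for k q
  proof -
    have "inA' (lift par v ! (q - 1))" using parent[OF that] letters by blast
    then show ?thesis
      using that edge parent[OF that]
      by (auto simp: lift_nth inA'_def prec_def split: option.splits)
  qed
  moreover have "fst (lift par v ! k) = snd (lift par v ! k)" if "k < length v" "par ! k = None" for k
    using that by (simp add: lift_nth)
  moreover have "length (lift par v) = length v"
    by (simp add: lift_def)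
  ultimately show ?thesis using len by (simp add: Sprime_def)
qed

lemma finite_pi_fibre: "finite {w. map snd w = v \<and> (\<forall>a \<in> set w. inA' a)}"
proof -
  define m where "m = Max (insert 0 (set v))"
  have "{w. map snd w = v \<and> (\<forall>a \<in> set w. inA' a)}
      \<subseteq> {w. set w \<subseteq> {0..m} \<times> {0..m} \<and> length w = length v}"
  proof clarify
    fix w assume letters: "\<forall>a \<in> set w. inA' a" and v: "v = map snd w"
    have "snd a \<le> m" if "a \<in> set w" for a
      using that by (force simp: m_def v)
    then show "set w \<subseteq> {0..m} \<times> {0..m} \<and> length w = length (map snd w)"
      using letters by (fastforce simp: inA'_def)
  qed
  moreover have "finite {w. set w \<subseteq> {0..m} \<times> {0..m} \<and> length w = length v}"
    by (intro finite_lists_length_eq) simp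
  ultimately show ?thesis by (rule finite_subset)
qed

lemma Sprime_letters: "Sprime par w \<noteq> 0 \<Longrightarrow> \<forall>a \<in> set w. inA' a"
  by (simp add: Sprime_def all_set_conv_all_nth split: if_splits)

lemma pi_Sprime:
  assumes pb: "parents_before par"
  shows "pi (Sprime par) v = (if increasing par v then 1 else 0)"
proof -
  define A where "A = {w. map snd w = v \<and> (\<forall>a \<in> set w. inA' a)}"
  have Sprime_on_A: "Sprime par w = (if w = lift par v then (if increasing par v then 1 else 0) else 0)"
    if "w \<in> A" for w
  proof (cases "w = lift par v \<and> increasing par v")
    case True
    then show ?thesis using Sprime_lift[OF pb] by simp
  next
    case False
    have "map snd w = v" using that by (simp add: A_def)
    then have "Sprime par w = 0" using False Sprime_nonzero_lift[OF pb, of w] by metis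
    then show ?thesis using False by simp
  qed
  have lift_in_A: "increasing par v \<Longrightarrow> lift par v \<in> A"
    using Sprime_lift[OF pb, of v] Sprime_letters[of par "lift par v"]
    by (simp add: A_def map_snd_lift)
  have "pi (Sprime par) v = (\<Sum>w \<in> A. if w = lift par v then (if increasing par v then 1 else 0) else 0)"
    unfolding pi_def A_def[symmetric] using Sprime_on_A by (rule sum.cong[OF refl])
  also have "\<dots> = (if increasing par v then 1 else 0)"
    using finite_pi_fibre[of v] lift_in_A by (simp add: A_def[symmetric])
  finally show ?thesis .
qed

section \<open>Packing\<close>

definition rank :: "nat set \<Rightarrow> nat \<Rightarrow> nat" where
  "rank S x = card {y \<in> S. y \<le> x}"

lemma pack_eq_map_rank: "pack w = map (rank (set w)) w"
  by (simp add: pack_def rank_def)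

lemma rank_bounds:
  assumes "finite S" and "x \<in> S"
  shows "1 \<le> rank S x \<and> rank S x \<le> card S"
proof -
  have "{y \<in> S. y \<le> x} \<noteq> {}" using assms(2) by auto
  then have "card {y \<in> S. y \<le> x} \<noteq> 0" using assms(1) by simp
  moreover have "card {y \<in> S. y \<le> x} \<le> card S" using assms(1) by (intro card_mono) auto
  ultimately show ?thesis unfolding rank_def by linarith
qed

lemma rank_less_iff:
  assumes S: "finite S" and "x \<in> S" and "y \<in> S"
  shows "rank S x < rank S y \<longleftrightarrow> x < y"
proof
  assume "x < y"
  then have "{z \<in> S. z \<le> x} \<subset> {z \<in> S. z \<le> y}" using \<open>y \<in> S\<close> by force
  then show "rank S x < rank S y" unfolding rank_def using S by (intro psubset_card_mono) auto
next
  assume less: "rank S x < rank S y"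
  show "x < y"
  proof (rule ccontr)
    assume "\<not> x < y"
    then have "rank S y \<le> rank S x" unfolding rank_def using S by (intro card_mono) auto
    then show False using less by simp
  qed
qed

lemma pack_nth_less_iff:
  assumes "i < length w" and "j < length w"
  shows "pack w ! i < pack w ! j \<longleftrightarrow> w ! i < w ! j"
  using assms rank_less_iff[of "set w" "w ! i" "w ! j"] by (simp add: pack_eq_map_rank)

lemma length_pack [simp]: "length (pack w) = length w"
  by (simp add: pack_def)

lemma zero_notin_pack: "0 \<notin> set (pack w)"
  using rank_bounds[of "set w"] by (force simp: pack_eq_map_rank)

lemma packed_pack: "packed (pack w)"
proof -
  let ?S = "set w"
  have "inj_on (rank ?S) ?S"
    by (rule inj_onI) (metis finite_set linorder_neqE_nat rank_less_iff less_irrefl)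
  then have "card (rank ?S ` ?S) = card ?S" by (rule card_image)
  moreover have "rank ?S ` ?S \<subseteq> {1..card ?S}" using rank_bounds[of ?S] by auto
  ultimately have image: "rank ?S ` ?S = {1..card ?S}" by (intro card_subset_eq) auto
  moreover have "set (pack w) = rank ?S ` ?S" by (simp add: pack_eq_map_rank)
  ultimately show ?thesis by (simp add: packed_def length_remdups_card_conv)
qed

lemma pack_Cons_min:
  assumes "\<forall>y \<in> set v. x < y"
  shows "pack (x # v) = 1 # map Suc (pack v)"
proof -
  have "{y \<in> insert x (set v). y \<le> x} = {x}" using assms by auto
  moreover have "{y \<in> insert x (set v). y \<le> z} = insert x {y \<in> set v. y \<le> z}"
    and "x \<notin> {y \<in> set v. y \<le> z}" if "z \<in> set v" for z
    using assms that by auto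
  ultimately show ?thesis by (simp add: pack_eq_map_rank rank_def)
qed

lemma pack_Cons_minD:
  assumes pv: "pack v = 1 # map Suc u" and u: "0 \<notin> set u"
  shows "v \<noteq> [] \<and> (\<forall>y \<in> set (tl v). hd v < y)"
proof -
  obtain x v' where v: "v = x # v'"
    using pv by (cases v) (simp_all add: pack_def)
  have len: "length u = length v'"
    using arg_cong[OF pv, of length] v by simp
  have "x < v' ! i" if i: "i < length v'" for i
  proof -
    have "u ! i \<noteq> 0" using i len u nth_mem by metis
    then have "pack v ! 0 < pack v ! Suc i" using pv i len by simp
    moreover have "Suc i < length v" using i v by simp
    ultimately show ?thesis using pack_nth_less_iff[of 0 v "Suc i"] v by simp
  qed
  then show ?thesis using v by (simp add: all_set_conv_all_nth)
qed

lemma increasing_pack: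
  assumes pb: "parents_before par" and w: "0 \<notin> set w"
  shows "increasing par (pack w) \<longleftrightarrow> increasing par w"
proof (cases "length w = length par")
  case True
  have "q - 1 < length w" if "k < length w" "par ! k = Some q" for k q
    using pb True that unfolding parents_before_def by fastforce
  then have "edges_increase par (pack w) \<longleftrightarrow> edges_increase par w"
    unfolding edges_increase_def using pack_nth_less_iff by auto
  then show ?thesis using w zero_notin_pack by (simp add: increasing_def)
qed (simp add: increasing_def)

section \<open>The map b\<close>

(* The words occurring in some M_{1 . u[1]}: the first letter is positive and strictly
   smaller than all the others. *)
definition head_min :: "nat list \<Rightarrow> bool" where
  "head_min v \<longleftrightarrow> v \<noteq> [] \<and> 0 < hd v \<and> (\<forall>y \<in> set (tl v). hd v < y)"

lemma bmap_eq: "bmap f v = (if head_min v then f (pack (tl v)) else 0)"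
proof -
  define U where "U = {u. packed u \<and> M (1 # map Suc u) v \<noteq> 0}"
  have bmap_U: "bmap f v = (\<Sum>u \<in> U. f u * M (1 # map Suc u) v)"
    unfolding bmap_def U_def ..
  have M_nonzero: "M (1 # map Suc u) v \<noteq> 0 \<longleftrightarrow> 0 \<notin> set v \<and> pack v = 1 # map Suc u" for u
    by (simp add: M_def)
  have packed_pos: "packed u \<Longrightarrow> 0 \<notin> set u" for u
    by (auto simp: packed_def)
  show ?thesis
  proof (cases "head_min v")
    case True
    then obtain x v' where v: "v = x # v'" "0 < x" "\<forall>y \<in> set v'. x < y"
      by (cases v) (auto simp: head_min_def)
    have pv: "pack v = 1 # map Suc (pack v')" using pack_Cons_min[OF v(3)] v(1) by simp
    have "0 \<notin> set v" using v by auto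
    have "u \<in> U \<longleftrightarrow> packed u \<and> u = pack v'" for u
      using \<open>0 \<notin> set v\<close> pv unfolding U_def mem_Collect_eq M_nonzero by auto
    then have "U = {pack v'}"
      using packed_pack[of v'] by auto
    moreover have "M (1 # map Suc (pack v')) v = 1" using pv \<open>0 \<notin> set v\<close> by (simp add: M_def)
    moreover have "tl v = v'" using v(1) by simp
    ultimately show ?thesis using True by (simp add: bmap_U)
  next
    case False
    have "U = {}"
    proof (rule ccontr)
      assume "U \<noteq> {}"
      then obtain u where u: "packed u" and v: "0 \<notin> set v" "pack v = 1 # map Suc u"
        unfolding U_def M_nonzero by blast
      have "v \<noteq> [] \<and> (\<forall>y \<in> set (tl v). hd v < y)"
        using pack_Cons_minD[OF v(2) packed_pos[OF u]] .
      then show False using False v(1) by (cases v) (auto simp: head_min_def)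
    qed
    then show ?thesis using False by (simp add: bmap_U)
  qed
qed

section \<open>Grafting\<close>

definition graft :: "rforest \<Rightarrow> rforest" where
  "graft par = None # map (shift (Some 1) 1) par"

lemma iota_Bplus: "iota [Bplus F] = graft (iota F)"
proof -
  have "iota [Bplus F] = None # iota_f 1 (Some 1) F"
    by (simp add: iota_def Bplus_def)
  then show ?thesis by (simp only: iota_f_eq_shift_iota graft_def)
qed

(* Along increasing edges every vertex lies above its root, so a bound valid at all roots
   holds everywhere. *)
lemma above_roots:
  assumes pb: "parents_before par" and len: "length v = length par"
    and edges: "edges_increase par v"
    and roots: "\<And>k. k < length v \<Longrightarrow> par ! k = None \<Longrightarrow> c < v ! k"
  shows "k < length v \<Longrightarrow> c < v ! k"
proof (induction k rule: less_induct)
  case (less k)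
  show ?case
  proof (cases "par ! k")
    case None
    then show ?thesis using roots less.prems by simp
  next
    case (Some q)
    then have "q - 1 < k" using pb less.prems len unfolding parents_before_def by fastforce
    then have "c < v ! (q - 1)" using less.IH less.prems by simp
    also have "v ! (q - 1) < v ! k" using edges less.prems Some unfolding edges_increase_def by blast
    finally show ?thesis .
  qed
qed

lemma edges_increase_graft:
  assumes pb: "parents_before par" and len: "length v = length par"
  shows "edges_increase (graft par) (x # v) \<longleftrightarrow>
    (\<forall>k < length v. par ! k = None \<longrightarrow> x < v ! k) \<and> edges_increase par v"
proof -
  have vertex: "(\<forall>q. graft par ! Suc k = Some q \<longrightarrow> (x # v) ! (q - 1) < (x # v) ! Suc k) \<longleftrightarrow>
      (par ! k = None \<longrightarrow> x < v ! k) \<and> (\<forall>q. par ! k = Some q \<longrightarrow> v ! (q - 1) < v ! k)"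
    if k: "k < length v" for k
  proof (cases "par ! k")
    case None
    then show ?thesis using k len by (simp add: graft_def shift_def)
  next
    case (Some q)
    then have "1 \<le> q" using pb k len unfolding parents_before_def by auto
    then show ?thesis using Some k len by (cases q) (simp_all add: graft_def shift_def)
  qed
  show ?thesis
    unfolding edges_increase_def length_Cons All_less_Suc2 using vertex
    by (auto simp: graft_def)
qed

lemma increasing_graft:
  assumes pb: "parents_before par"
  shows "increasing (graft par) v \<longleftrightarrow> head_min v \<and> increasing par (tl v)"
proof (cases v)
  case Nil
  then show ?thesis by (simp add: increasing_def head_min_def graft_def)
next
  case (Cons x v')
  show ?thesis
  proof (cases "length v' = length par")
    case len: True
    have "(\<forall>k < length v'. par ! k = None \<longrightarrow> x < v' ! k) \<and> edges_increase par v'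
        \<longleftrightarrow> (\<forall>y \<in> set v'. x < y) \<and> edges_increase par v'"
      using above_roots[OF pb len, where c = x] by (auto simp: all_set_conv_all_nth)
    then show ?thesis
      using Cons edges_increase_graft[OF pb len, of x]
      by (auto simp: increasing_def head_min_def graft_def len)
  qed (simp add: Cons increasing_def graft_def)
qed

theorem mainTheorem7:
  fixes F :: pforest
  shows "pi (Sprime (iota [Bplus F])) = bmap (pi (Sprime (iota F)))"
proof
  fix v
  have pb: "parents_before (iota F)" by (rule parents_before_iota)
  have tail_pos: "head_min v \<Longrightarrow> 0 \<notin> set (tl v)"
    by (auto simp: head_min_def)
  have "pi (Sprime (iota [Bplus F])) v = (if increasing (graft (iota F)) v then 1 else 0)"
    using pi_Sprime[OF parents_before_iota[of "[Bplus F]"]] by (simp add: iota_Bplus)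
  also have "\<dots> = (if head_min v \<and> increasing (iota F) (pack (tl v)) then 1 else 0)"
    using increasing_graft[OF pb] increasing_pack[OF pb] tail_pos by auto
  also have "\<dots> = bmap (pi (Sprime (iota F))) v"
    by (simp add: bmap_eq pi_Sprime[OF pb])
  finally show "pi (Sprime (iota [Bplus F])) v = bmap (pi (Sprime (iota F))) v" .
qed

end
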